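(* Let $H$ be a hyperring, $i:A\to B$ a strict injective morphism of $H$-modules (identify $A$ with $i(A)$, a submodule of $B$), and $C$ a submodule of $A$. Let $j:A\to A/C$ and $j':B\to B/C$ be the quotient maps. Then the induced map $i':A/C\to B/C$, $[x]\mapsto[i(x)]$, is a well-defined strict injective morphism, and the square with top $i$, left $j$, right $j'$, bottom $i'$ is both a pullback and a pushout in $\mathrm{Mod}_H$.
   Context: A hyperaddition on a set $M$ is a commutative map $M\times M\to\{$nonempty subsets of $M\}$; for subsets $X+Y=\bigcup_{x\in X,y\in Y}(x+y)$, and elements are identified with singletons. A hypergroup: $(a+b)+c=a+(b+c)$; unique $0$ with $a+0=\{a\}$; unique $-a$ with $0\in a+(-a)$; $a\in b+c\Rightarrow c\in a+(-b)$. A hyperring is a hypergroup with commutative monoid multiplication distributing over hyperaddition. An $H$-module is a hypergroup $M$ with $H\times M\to M$ such that $1m=m$, $0m=0$, $(xy)m=x(ym)$, $x(m_1+m_2)=xm_1+xm_2$, $(x+y)m=xm+ym$. A morphism satisfies $f(0)=0$, $f(rm)=rf(m)$, $f(a+b)\subseteq f(a)+f(b)$; it is strict if equality holds. A submodule of $M$ is a subset $N$ containing $0$, closed under negatives and scalar multiplication, with $a+b\subseteq N$ for all $a,b\in N$. For a submodule $C$ of $B$, $B/C$ is the set of classes of $b_1\equiv b_2\iff b_1+C=b_2+C$, with hyperaddition $[x]+[y]=\{[z]: z\in x'+y', x'\equiv x, y'\equiv y\}$ and action $r[x]=[rx]$. *)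

theory Defs
  imports Main
begin

record 'a hgroup =
  hcarrier :: "'a set"
  hadd :: "'a \<Rightarrow> 'a \<Rightarrow> 'a set"
  hzero :: 'a
  hneg :: "'a \<Rightarrow> 'a"

record 'r hring = "'r hgroup" +
  hmul :: "'r \<Rightarrow> 'r \<Rightarrow> 'r"
  hone :: 'r

record ('a, 'r) hmod = "'a hgroup" +
  smul :: "'r \<Rightarrow> 'a \<Rightarrow> 'a"

definition setadd :: "('a, 'z) hgroup_scheme \<Rightarrow> 'a set \<Rightarrow> 'a set \<Rightarrow> 'a set" where
  "setadd G X Y = (\<Union>x\<in>X. \<Union>y\<in>Y. hadd G x y)"

definition hypergroup :: "('a, 'z) hgroup_scheme \<Rightarrow> bool" where
  "hypergroup G \<longleftrightarrow>
     (\<forall>a\<in>hcarrier G. \<forall>b\<in>hcarrier G. hadd G a b \<noteq> {} \<and> hadd G a b \<subseteq> hcarrier G) \<and>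
     (\<forall>a\<in>hcarrier G. \<forall>b\<in>hcarrier G. hadd G a b = hadd G b a) \<and>
     (\<forall>a\<in>hcarrier G. \<forall>b\<in>hcarrier G. \<forall>c\<in>hcarrier G.
         setadd G (hadd G a b) {c} = setadd G {a} (hadd G b c)) \<and>
     hzero G \<in> hcarrier G \<and>
     (\<forall>a\<in>hcarrier G. hadd G a (hzero G) = {a}) \<and>
     (\<forall>z\<in>hcarrier G. (\<forall>a\<in>hcarrier G. hadd G a z = {a}) \<longrightarrow> z = hzero G) \<and>
     (\<forall>a\<in>hcarrier G. hneg G a \<in> hcarrier G \<and> hzero G \<in> hadd G a (hneg G a)) \<and>
     (\<forall>a\<in>hcarrier G. \<forall>b\<in>hcarrier G. hzero G \<in> hadd G a b \<longrightarrow> b = hneg G a) \<and>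
     (\<forall>a\<in>hcarrier G. \<forall>b\<in>hcarrier G. \<forall>c\<in>hcarrier G.
         a \<in> hadd G b c \<longrightarrow> c \<in> hadd G a (hneg G b))"

definition hyperring :: "'r hring \<Rightarrow> bool" where
  "hyperring H \<longleftrightarrow> hypergroup H \<and>
     (\<forall>x\<in>hcarrier H. \<forall>y\<in>hcarrier H. hmul H x y \<in> hcarrier H) \<and>
     (\<forall>x\<in>hcarrier H. \<forall>y\<in>hcarrier H. \<forall>z\<in>hcarrier H.
         hmul H (hmul H x y) z = hmul H x (hmul H y z)) \<and>
     (\<forall>x\<in>hcarrier H. \<forall>y\<in>hcarrier H. hmul H x y = hmul H y x) \<and>
     hone H \<in> hcarrier H \<and>
     (\<forall>x\<in>hcarrier H. hmul H (hone H) x = x) \<and>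
     (\<forall>x\<in>hcarrier H. \<forall>y\<in>hcarrier H. \<forall>z\<in>hcarrier H.
         hmul H x ` hadd H y z = hadd H (hmul H x y) (hmul H x z))"

definition hmodule :: "'r hring \<Rightarrow> ('a, 'r) hmod \<Rightarrow> bool" where
  "hmodule H M \<longleftrightarrow> hyperring H \<and> hypergroup M \<and>
     (\<forall>r\<in>hcarrier H. \<forall>m\<in>hcarrier M. smul M r m \<in> hcarrier M) \<and>
     (\<forall>m\<in>hcarrier M. smul M (hone H) m = m) \<and>
     (\<forall>m\<in>hcarrier M. smul M (hzero H) m = hzero M) \<and>
     (\<forall>x\<in>hcarrier H. \<forall>y\<in>hcarrier H. \<forall>m\<in>hcarrier M.
         smul M (hmul H x y) m = smul M x (smul M y m)) \<and>
     (\<forall>x\<in>hcarrier H. \<forall>m1\<in>hcarrier M. \<forall>m2\<in>hcarrier M.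
         smul M x ` hadd M m1 m2 = hadd M (smul M x m1) (smul M x m2)) \<and>
     (\<forall>x\<in>hcarrier H. \<forall>y\<in>hcarrier H. \<forall>m\<in>hcarrier M.
         (\<lambda>r. smul M r m) ` hadd H x y = hadd M (smul M x m) (smul M y m))"

definition hmorphism :: "'r hring \<Rightarrow> ('a, 'r) hmod \<Rightarrow> ('b, 'r) hmod \<Rightarrow> ('a \<Rightarrow> 'b) \<Rightarrow> bool" where
  "hmorphism H M N f \<longleftrightarrow>
     (\<forall>m\<in>hcarrier M. f m \<in> hcarrier N) \<and>
     f (hzero M) = hzero N \<and>
     (\<forall>r\<in>hcarrier H. \<forall>m\<in>hcarrier M. f (smul M r m) = smul N r (f m)) \<and>
     (\<forall>a\<in>hcarrier M. \<forall>b\<in>hcarrier M. f ` hadd M a b \<subseteq> hadd N (f a) (f b))"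

definition strict_hmorphism :: "'r hring \<Rightarrow> ('a, 'r) hmod \<Rightarrow> ('b, 'r) hmod \<Rightarrow> ('a \<Rightarrow> 'b) \<Rightarrow> bool" where
  "strict_hmorphism H M N f \<longleftrightarrow> hmorphism H M N f \<and>
     (\<forall>a\<in>hcarrier M. \<forall>b\<in>hcarrier M. f ` hadd M a b = hadd N (f a) (f b))"

definition hsubmodule :: "'r hring \<Rightarrow> ('a, 'r) hmod \<Rightarrow> 'a set \<Rightarrow> bool" where
  "hsubmodule H M N \<longleftrightarrow> N \<subseteq> hcarrier M \<and> hzero M \<in> N \<and>
     (\<forall>a\<in>N. hneg M a \<in> N) \<and>
     (\<forall>r\<in>hcarrier H. \<forall>a\<in>N. smul M r a \<in> N) \<and>
     (\<forall>a\<in>N. \<forall>b\<in>N. hadd M a b \<subseteq> N)"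

definition qclass :: "('a, 'r) hmod \<Rightarrow> 'a set \<Rightarrow> 'a \<Rightarrow> 'a set" where
  "qclass M C x = {y \<in> hcarrier M. setadd M {y} C = setadd M {x} C}"

definition quot :: "('a, 'r) hmod \<Rightarrow> 'a set \<Rightarrow> ('a set, 'r) hmod" where
  "quot M C = \<lparr> hcarrier = qclass M C ` hcarrier M,
     hadd = (\<lambda>X Y. {qclass M C z | z x' y'. x' \<in> X \<and> y' \<in> Y \<and> z \<in> hadd M x' y'}),
     hzero = qclass M C (hzero M),
     hneg = (\<lambda>X. qclass M C (hneg M (SOME x. x \<in> X))),
     smul = (\<lambda>r X. qclass M C (smul M r (SOME x. x \<in> X))) \<rparr>"

definition induced_map :: "('b, 'r) hmod \<Rightarrow> 'a set \<Rightarrow> ('a \<Rightarrow> 'b) \<Rightarrow> 'a set \<Rightarrow> 'b set" where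
  "induced_map B C i X = qclass B (i ` C) (i (SOME x. x \<in> X))"

text \<open>Commutative square  P --tp--> Q,  P --lf--> R,  Q --rt--> S,  R --bt--> S
  of H-modules and morphisms.\<close>
definition comm_square ::
  "'r hring \<Rightarrow> ('p, 'r) hmod \<Rightarrow> ('q, 'r) hmod \<Rightarrow> ('s, 'r) hmod \<Rightarrow> ('t, 'r) hmod \<Rightarrow>
   ('p \<Rightarrow> 'q) \<Rightarrow> ('p \<Rightarrow> 's) \<Rightarrow> ('q \<Rightarrow> 't) \<Rightarrow> ('s \<Rightarrow> 't) \<Rightarrow> bool" where
  "comm_square H P Q R S tp lf rt bt \<longleftrightarrow>
     hmodule H P \<and> hmodule H Q \<and> hmodule H R \<and> hmodule H S \<and>
     hmorphism H P Q tp \<and> hmorphism H P R lf \<and>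
     hmorphism H Q S rt \<and> hmorphism H R S bt \<and>
     (\<forall>x\<in>hcarrier P. rt (tp x) = bt (lf x))"

text \<open>Pullback; test objects range over all H-modules with carrier type 'd
  (the type variable is universally quantified at theorem level).\<close>
definition is_pullback ::
  "'r hring \<Rightarrow> ('p, 'r) hmod \<Rightarrow> ('q, 'r) hmod \<Rightarrow> ('s, 'r) hmod \<Rightarrow> ('t, 'r) hmod \<Rightarrow>
   ('p \<Rightarrow> 'q) \<Rightarrow> ('p \<Rightarrow> 's) \<Rightarrow> ('q \<Rightarrow> 't) \<Rightarrow> ('s \<Rightarrow> 't) \<Rightarrow> 'd itself \<Rightarrow> bool" where
  "is_pullback H P Q R S tp lf rt bt (_ :: 'd itself) \<longleftrightarrow>
     comm_square H P Q R S tp lf rt bt \<and>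
     (\<forall>(D :: ('d, 'r) hmod) (f :: 'd \<Rightarrow> 'q) (g :: 'd \<Rightarrow> 's).
        hmodule H D \<and> hmorphism H D Q f \<and> hmorphism H D R g \<and>
        (\<forall>x\<in>hcarrier D. rt (f x) = bt (g x)) \<longrightarrow>
        (\<exists>h. hmorphism H D P h \<and> (\<forall>x\<in>hcarrier D. tp (h x) = f x \<and> lf (h x) = g x) \<and>
           (\<forall>h'. hmorphism H D P h' \<and>
                 (\<forall>x\<in>hcarrier D. tp (h' x) = f x \<and> lf (h' x) = g x) \<longrightarrow>
                 (\<forall>x\<in>hcarrier D. h' x = h x))))"

definition is_pushout ::
  "'r hring \<Rightarrow> ('p, 'r) hmod \<Rightarrow> ('q, 'r) hmod \<Rightarrow> ('s, 'r) hmod \<Rightarrow> ('t, 'r) hmod \<Rightarrow>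
   ('p \<Rightarrow> 'q) \<Rightarrow> ('p \<Rightarrow> 's) \<Rightarrow> ('q \<Rightarrow> 't) \<Rightarrow> ('s \<Rightarrow> 't) \<Rightarrow> 'd itself \<Rightarrow> bool" where
  "is_pushout H P Q R S tp lf rt bt (_ :: 'd itself) \<longleftrightarrow>
     comm_square H P Q R S tp lf rt bt \<and>
     (\<forall>(D :: ('d, 'r) hmod) (f :: 'q \<Rightarrow> 'd) (g :: 's \<Rightarrow> 'd).
        hmodule H D \<and> hmorphism H Q D f \<and> hmorphism H R D g \<and>
        (\<forall>x\<in>hcarrier P. f (tp x) = g (lf x)) \<longrightarrow>
        (\<exists>h. hmorphism H S D h \<and> (\<forall>y\<in>hcarrier Q. h (rt y) = f y) \<and>
             (\<forall>z\<in>hcarrier R. h (bt z) = g z) \<and>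
           (\<forall>h'. hmorphism H S D h' \<and> (\<forall>y\<in>hcarrier Q. h' (rt y) = f y) \<and>
                 (\<forall>z\<in>hcarrier R. h' (bt z) = g z) \<longrightarrow>
                 (\<forall>w\<in>hcarrier S. h' w = h w))))"

end

theory Submission
  imports Defs
begin

text \<open>Since i is strict and injective, it maps the coset a + C bijectively onto
  i(a) + i(C); hence x \<equiv> y mod C iff i(x) \<equiv> i(y) mod i(C), which makes i' well defined
  and injective, and strictness passes to the quotients because [a] + [b] = {[z] | z \<in> a + b}.
  Pullback: an element of B whose class is i'([a]) lies in i(a) + i(C) = i(a + C), so every
  cone factors through i\<inverse>, and this factorization is a morphism because i is strict.
  Pushout: a morphism out of B that agrees on i(A) with one out of A/C kills i(C), hence is
  constant on cosets and factors through B/i(C).\<close>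

locale hyper_group =
  fixes G :: "('a, 'z) hgroup_scheme"
  assumes add_closed_nonempty:
      "\<forall>a\<in>hcarrier G. \<forall>b\<in>hcarrier G. hadd G a b \<noteq> {} \<and> hadd G a b \<subseteq> hcarrier G"
    and add_commute_ax: "\<forall>a\<in>hcarrier G. \<forall>b\<in>hcarrier G. hadd G a b = hadd G b a"
    and add_assoc_ax: "\<forall>a\<in>hcarrier G. \<forall>b\<in>hcarrier G. \<forall>c\<in>hcarrier G.
         setadd G (hadd G a b) {c} = setadd G {a} (hadd G b c)"
    and zero_closed [simp]: "hzero G \<in> hcarrier G"
    and add_zero_ax: "\<forall>a\<in>hcarrier G. hadd G a (hzero G) = {a}"
    and zero_unique: "\<forall>z\<in>hcarrier G. (\<forall>a\<in>hcarrier G. hadd G a z = {a}) \<longrightarrow> z = hzero G"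
    and neg_ax: "\<forall>a\<in>hcarrier G. hneg G a \<in> hcarrier G \<and> hzero G \<in> hadd G a (hneg G a)"
    and neg_unique_ax: "\<forall>a\<in>hcarrier G. \<forall>b\<in>hcarrier G. hzero G \<in> hadd G a b \<longrightarrow> b = hneg G a"
    and reversible_ax: "\<forall>a\<in>hcarrier G. \<forall>b\<in>hcarrier G. \<forall>c\<in>hcarrier G.
         a \<in> hadd G b c \<longrightarrow> c \<in> hadd G a (hneg G b)"

lemma hyper_group_iff_hypergroup: "hyper_group G \<longleftrightarrow> hypergroup G"
  unfolding hyper_group_def hypergroup_def by (simp only: conj_assoc)

context hyper_group
begin

lemma add_closed: "a \<in> hcarrier G \<Longrightarrow> b \<in> hcarrier G \<Longrightarrow> hadd G a b \<subseteq> hcarrier G"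
  using add_closed_nonempty by blast

lemma add_mem_carrier: "a \<in> hcarrier G \<Longrightarrow> b \<in> hcarrier G \<Longrightarrow> x \<in> hadd G a b \<Longrightarrow> x \<in> hcarrier G"
  using add_closed by blast

lemma add_nonempty: "a \<in> hcarrier G \<Longrightarrow> b \<in> hcarrier G \<Longrightarrow> hadd G a b \<noteq> {}"
  using add_closed_nonempty by blast

lemma add_commute: "a \<in> hcarrier G \<Longrightarrow> b \<in> hcarrier G \<Longrightarrow> hadd G a b = hadd G b a"
  using add_commute_ax by blast

lemma add_assoc: "a \<in> hcarrier G \<Longrightarrow> b \<in> hcarrier G \<Longrightarrow> c \<in> hcarrier G \<Longrightarrow>
    setadd G (hadd G a b) {c} = setadd G {a} (hadd G b c)"
  using add_assoc_ax by blast

lemma add_zero: "a \<in> hcarrier G \<Longrightarrow> hadd G a (hzero G) = {a}"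
  using add_zero_ax by blast

lemma zero_add: "a \<in> hcarrier G \<Longrightarrow> hadd G (hzero G) a = {a}"
  using add_zero add_commute zero_closed by metis

lemma neg_closed: "a \<in> hcarrier G \<Longrightarrow> hneg G a \<in> hcarrier G"
  using neg_ax by blast

lemma zero_mem_add_neg: "a \<in> hcarrier G \<Longrightarrow> hzero G \<in> hadd G a (hneg G a)"
  using neg_ax by blast

lemma neg_unique: "a \<in> hcarrier G \<Longrightarrow> b \<in> hcarrier G \<Longrightarrow> hzero G \<in> hadd G a b \<Longrightarrow> b = hneg G a"
  using neg_unique_ax by blast

lemma reversible: "a \<in> hcarrier G \<Longrightarrow> b \<in> hcarrier G \<Longrightarrow> c \<in> hcarrier G \<Longrightarrow>
    a \<in> hadd G b c \<Longrightarrow> c \<in> hadd G a (hneg G b)"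
  using reversible_ax by blast

lemma reversible': "a \<in> hcarrier G \<Longrightarrow> b \<in> hcarrier G \<Longrightarrow> c \<in> hcarrier G \<Longrightarrow>
    a \<in> hadd G b c \<Longrightarrow> b \<in> hadd G a (hneg G c)"
  using reversible add_commute by metis

lemma add_reassoc_right:
  assumes "a \<in> hcarrier G" "b \<in> hcarrier G" "c \<in> hcarrier G" "u \<in> hadd G a b" "w \<in> hadd G u c"
  obtains v where "v \<in> hadd G b c" "w \<in> hadd G a v"
proof -
  have "w \<in> setadd G (hadd G a b) {c}" using assms(4,5) unfolding setadd_def by blast
  then have "w \<in> setadd G {a} (hadd G b c)" using add_assoc assms(1-3) by simp
  then show ?thesis using that unfolding setadd_def by blast
qed

lemma add_reassoc_left:
  assumes "a \<in> hcarrier G" "b \<in> hcarrier G" "c \<in> hcarrier G" "v \<in> hadd G b c" "w \<in> hadd G a v"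
  obtains u where "u \<in> hadd G a b" "w \<in> hadd G u c"
proof -
  have "w \<in> setadd G {a} (hadd G b c)" using assms(4,5) unfolding setadd_def by blast
  then have "w \<in> setadd G (hadd G a b) {c}" using add_assoc assms(1-3) by simp
  then show ?thesis using that unfolding setadd_def by blast
qed

lemma neg_mem_add_neg:
  assumes a: "a \<in> hcarrier G" and b: "b \<in> hcarrier G" and s: "s \<in> hadd G a b"
  shows "hneg G s \<in> hadd G (hneg G a) (hneg G b)"
proof -
  have s_car: "s \<in> hcarrier G" using add_mem_carrier a b s .
  have "b \<in> hadd G s (hneg G a)" using reversible a b s_car s by blast
  then have "hneg G a \<in> hadd G b (hneg G s)" using reversible b s_car neg_closed a by blast
  then show ?thesis using reversible neg_closed a b s_car by blast
qed

end

lemma hyperringD: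
  assumes "hyperring H"
  shows hyperring_hyper_group: "hyper_group H"
    and hyperring_mul_closed: "x \<in> hcarrier H \<Longrightarrow> y \<in> hcarrier H \<Longrightarrow> hmul H x y \<in> hcarrier H"
    and hyperring_one_closed: "hone H \<in> hcarrier H"
  using assms unfolding hyperring_def hyper_group_iff_hypergroup by simp_all

lemma hmoduleD:
  assumes "hmodule H M"
  shows hmodule_hyperring: "hyperring H"
    and hmodule_hyper_group: "hyper_group M"
    and hmodule_smul_closed: "r \<in> hcarrier H \<Longrightarrow> m \<in> hcarrier M \<Longrightarrow> smul M r m \<in> hcarrier M"
    and hmodule_smul_one: "m \<in> hcarrier M \<Longrightarrow> smul M (hone H) m = m"
    and hmodule_smul_zero: "m \<in> hcarrier M \<Longrightarrow> smul M (hzero H) m = hzero M"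
    and hmodule_smul_assoc: "x \<in> hcarrier H \<Longrightarrow> y \<in> hcarrier H \<Longrightarrow> m \<in> hcarrier M \<Longrightarrow>
      smul M (hmul H x y) m = smul M x (smul M y m)"
    and hmodule_smul_add_distrib: "x \<in> hcarrier H \<Longrightarrow> m \<in> hcarrier M \<Longrightarrow> m' \<in> hcarrier M \<Longrightarrow>
      smul M x ` hadd M m m' = hadd M (smul M x m) (smul M x m')"
    and hmodule_add_smul_distrib: "x \<in> hcarrier H \<Longrightarrow> y \<in> hcarrier H \<Longrightarrow> m \<in> hcarrier M \<Longrightarrow>
      (\<lambda>r. smul M r m) ` hadd H x y = hadd M (smul M x m) (smul M y m)"
  using assms unfolding hmodule_def hyper_group_iff_hypergroup by simp_all

lemma hmorphism_carrier: "hmorphism H M N f \<Longrightarrow> m \<in> hcarrier M \<Longrightarrow> f m \<in> hcarrier N"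
  unfolding hmorphism_def by blast

lemma hmorphism_zero: "hmorphism H M N f \<Longrightarrow> f (hzero M) = hzero N"
  unfolding hmorphism_def by blast

lemma hmorphism_smul:
  "hmorphism H M N f \<Longrightarrow> r \<in> hcarrier H \<Longrightarrow> m \<in> hcarrier M \<Longrightarrow> f (smul M r m) = smul N r (f m)"
  unfolding hmorphism_def by blast

lemma hmorphism_add:
  "hmorphism H M N f \<Longrightarrow> a \<in> hcarrier M \<Longrightarrow> b \<in> hcarrier M \<Longrightarrow> f ` hadd M a b \<subseteq> hadd N (f a) (f b)"
  unfolding hmorphism_def by blast

lemma strict_hmorphism_add:
  "strict_hmorphism H M N f \<Longrightarrow> a \<in> hcarrier M \<Longrightarrow> b \<in> hcarrier M \<Longrightarrow> f ` hadd M a b = hadd N (f a) (f b)"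
  unfolding strict_hmorphism_def by blast

lemma strict_hmorphism_hmorphism: "strict_hmorphism H M N f \<Longrightarrow> hmorphism H M N f"
  unfolding strict_hmorphism_def by blast

lemma hmorphism_neg:
  assumes M: "hmodule H M" and N: "hmodule H N" and f: "hmorphism H M N f" and a: "a \<in> hcarrier M"
  shows "f (hneg M a) = hneg N (f a)"
proof -
  interpret M: hyper_group M using M by (rule hmodule_hyper_group)
  interpret N: hyper_group N using N by (rule hmodule_hyper_group)
  have "f (hzero M) \<in> hadd N (f a) (f (hneg M a))"
    using hmorphism_add[OF f a M.neg_closed[OF a]] M.zero_mem_add_neg[OF a] by blast
  then show ?thesis
    using N.neg_unique hmorphism_zero[OF f] hmorphism_carrier[OF f] a M.neg_closed by metis
qed

lemma hsubmoduleD: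
  assumes "hsubmodule H M C"
  shows hsubmodule_carrier: "c \<in> C \<Longrightarrow> c \<in> hcarrier M"
    and hsubmodule_zero: "hzero M \<in> C"
    and hsubmodule_neg: "c \<in> C \<Longrightarrow> hneg M c \<in> C"
    and hsubmodule_smul: "r \<in> hcarrier H \<Longrightarrow> c \<in> C \<Longrightarrow> smul M r c \<in> C"
    and hsubmodule_add: "c \<in> C \<Longrightarrow> c' \<in> C \<Longrightarrow> x \<in> hadd M c c' \<Longrightarrow> x \<in> C"
  using assms unfolding hsubmodule_def by blast+

lemma strict_hmorphism_image_submodule:
  assumes M: "hmodule H M" and N: "hmodule H N" and f: "strict_hmorphism H M N f"
    and C: "hsubmodule H M C"
  shows "hsubmodule H N (f ` C)"
  unfolding hsubmodule_def
proof (intro conjI ballI subsetI)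
  have fm: "hmorphism H M N f" using f by (rule strict_hmorphism_hmorphism)
  note C_car = hsubmodule_carrier[OF C]
  show "y \<in> hcarrier N" if "y \<in> f ` C" for y
    using that C_car hmorphism_carrier[OF fm] by blast
  show "hzero N \<in> f ` C"
    using hsubmodule_zero[OF C] hmorphism_zero[OF fm] by (metis imageI)
  show "hneg N y \<in> f ` C" if y: "y \<in> f ` C" for y
  proof -
    obtain c where c: "c \<in> C" "y = f c" using y by blast
    then have "hneg N y = f (hneg M c)" using hmorphism_neg[OF M N fm C_car] by simp
    then show ?thesis using hsubmodule_neg[OF C c(1)] by simp
  qed
  show "smul N r y \<in> f ` C" if r: "r \<in> hcarrier H" and y: "y \<in> f ` C" for r y
  proof -
    obtain c where c: "c \<in> C" "y = f c" using y by blast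
    then have "smul N r y = f (smul M r c)" using hmorphism_smul[OF fm r C_car] by simp
    then show ?thesis using hsubmodule_smul[OF C r c(1)] by simp
  qed
  show "z \<in> f ` C" if y: "y \<in> f ` C" "y' \<in> f ` C" and z: "z \<in> hadd N y y'" for y y' z
  proof -
    obtain c c' where c: "c \<in> C" "c' \<in> C" "y = f c" "y' = f c'" using y by blast
    then have "z \<in> f ` hadd M c c'" using z strict_hmorphism_add[OF f] C_car by simp
    then show ?thesis using hsubmodule_add[OF C c(1,2)] by blast
  qed
qed

lemma strict_hmorphism_image_coset:
  assumes f: "strict_hmorphism H M N f" and C: "C \<subseteq> hcarrier M" and a: "a \<in> hcarrier M"
  shows "setadd N {f a} (f ` C) = f ` setadd M {a} C"
proof -
  have "setadd N {f a} (f ` C) = (\<Union>c\<in>C. hadd N (f a) (f c))" by (simp add: setadd_def)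
  also have "\<dots> = (\<Union>c\<in>C. f ` hadd M a c)" using strict_hmorphism_add[OF f a] C by blast
  also have "\<dots> = f ` setadd M {a} C" by (simp add: setadd_def image_UN)
  finally show ?thesis .
qed

lemma hmorphism_comp:
  assumes "hmorphism H M N f" and "hmorphism H N P g"
  shows "hmorphism H M P (g \<circ> f)"
  unfolding hmorphism_def comp_def
proof (intro conjI ballI)
  show "g (f m) \<in> hcarrier P" if "m \<in> hcarrier M" for m
    using hmorphism_carrier assms that by metis
  show "g (f (hzero M)) = hzero P"
    using hmorphism_zero assms by metis
  show "g (f (smul M r m)) = smul P r (g (f m))" if "r \<in> hcarrier H" "m \<in> hcarrier M" for r m
    using hmorphism_smul[OF assms(1) that] hmorphism_smul[OF assms(2) that(1)]
      hmorphism_carrier[OF assms(1) that(2)] by simp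
  show "(\<lambda>x. g (f x)) ` hadd M a b \<subseteq> hadd P (g (f a)) (g (f b))"
    if "a \<in> hcarrier M" "b \<in> hcarrier M" for a b
  proof -
    have "(\<lambda>x. g (f x)) ` hadd M a b = g ` f ` hadd M a b" by (simp add: image_image)
    also have "\<dots> \<subseteq> g ` hadd N (f a) (f b)" using hmorphism_add[OF assms(1) that] by blast
    also have "\<dots> \<subseteq> hadd P (g (f a)) (g (f b))"
      using hmorphism_add[OF assms(2)] hmorphism_carrier[OF assms(1)] that by blast
    finally show ?thesis .
  qed
qed

lemma strict_hmorphism_comp:
  assumes f: "strict_hmorphism H M N f" and g: "strict_hmorphism H N P g"
  shows "strict_hmorphism H M P (g \<circ> f)"
  unfolding strict_hmorphism_def
proof (intro conjI ballI)
  show "hmorphism H M P (g \<circ> f)"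
    using hmorphism_comp[OF strict_hmorphism_hmorphism[OF f] strict_hmorphism_hmorphism[OF g]] .
  show "(g \<circ> f) ` hadd M a b = hadd P ((g \<circ> f) a) ((g \<circ> f) b)"
    if "a \<in> hcarrier M" "b \<in> hcarrier M" for a b
  proof -
    have "(g \<circ> f) ` hadd M a b = g ` hadd N (f a) (f b)"
      using strict_hmorphism_add[OF f that] by (metis image_comp)
    also have "\<dots> = hadd P (g (f a)) (g (f b))"
      using strict_hmorphism_add[OF g] hmorphism_carrier[OF strict_hmorphism_hmorphism[OF f]] that
      by simp
    finally show ?thesis by simp
  qed
qed

definition quot_lift :: "('a \<Rightarrow> 'b) \<Rightarrow> 'a set \<Rightarrow> 'b" where
  "quot_lift f X = f (SOME x. x \<in> X)"

locale hmodule_quotient =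
  fixes H :: "'r hring" and M :: "('a, 'r) hmod" and C :: "'a set"
  assumes hmodule: "hmodule H M" and submodule: "hsubmodule H M C"
begin

sublocale M: hyper_group M using hmodule by (rule hmodule_hyper_group)

lemmas sub_carrier = hsubmodule_carrier[OF submodule]
  and sub_zero = hsubmodule_zero[OF submodule]
  and sub_neg = hsubmodule_neg[OF submodule]
  and sub_smul = hsubmodule_smul[OF submodule]
  and sub_add = hsubmodule_add[OF submodule]

abbreviation coset :: "'a \<Rightarrow> 'a set" where
  "coset x \<equiv> setadd M {x} C"

lemma mem_coset_iff: "y \<in> coset x \<longleftrightarrow> (\<exists>c\<in>C. y \<in> hadd M x c)"
  by (auto simp: setadd_def)

lemma coset_self: "x \<in> hcarrier M \<Longrightarrow> x \<in> coset x"
  using M.add_zero sub_zero mem_coset_iff by fastforce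

lemma coset_carrier: "x \<in> hcarrier M \<Longrightarrow> y \<in> coset x \<Longrightarrow> y \<in> hcarrier M"
  using mem_coset_iff M.add_mem_carrier sub_carrier by blast

lemma coset_subset:
  assumes x: "x \<in> hcarrier M" and y: "y \<in> coset x"
  shows "coset y \<subseteq> coset x"
proof
  fix w assume "w \<in> coset y"
  then obtain c' where c': "c' \<in> C" "w \<in> hadd M y c'" using mem_coset_iff by blast
  obtain c where c: "c \<in> C" "y \<in> hadd M x c" using y mem_coset_iff by blast
  obtain v where v: "v \<in> hadd M c c'" "w \<in> hadd M x v"
    using M.add_reassoc_right[OF x sub_carrier[OF c(1)] sub_carrier[OF c'(1)] c(2) c'(2)] .
  then show "w \<in> coset x" using sub_add[OF c(1) c'(1)] mem_coset_iff by blast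
qed

lemma coset_sym:
  assumes x: "x \<in> hcarrier M" and y: "y \<in> coset x"
  shows "x \<in> coset y"
proof -
  obtain c where c: "c \<in> C" "y \<in> hadd M x c" using y mem_coset_iff by blast
  have "x \<in> hadd M y (hneg M c)"
    using M.reversible'[OF coset_carrier[OF x y] x sub_carrier[OF c(1)] c(2)] .
  then show ?thesis using sub_neg[OF c(1)] mem_coset_iff by blast
qed

lemma coset_eq_iff: "x \<in> hcarrier M \<Longrightarrow> y \<in> hcarrier M \<Longrightarrow> coset x = coset y \<longleftrightarrow> y \<in> coset x"
  using coset_self coset_subset coset_sym by blast

lemma mem_qclass_iff: "y \<in> qclass M C x \<longleftrightarrow> y \<in> hcarrier M \<and> coset y = coset x"
  by (simp add: qclass_def)

lemma qclass_self: "x \<in> hcarrier M \<Longrightarrow> x \<in> qclass M C x"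
  by (simp add: mem_qclass_iff)

lemma qclass_eq_iff:
  assumes "x \<in> hcarrier M"
  shows "qclass M C x = qclass M C y \<longleftrightarrow> coset x = coset y"
proof
  assume "qclass M C x = qclass M C y"
  then show "coset x = coset y" using qclass_self[OF assms] mem_qclass_iff by blast
qed (simp add: qclass_def)

lemma qclass_eq_of_mem_coset: "x \<in> hcarrier M \<Longrightarrow> y \<in> coset x \<Longrightarrow> qclass M C y = qclass M C x"
  using qclass_eq_iff coset_eq_iff coset_carrier by metis

lemma coset_zero: "coset (hzero M) = C"
  by (auto simp: mem_coset_iff M.zero_add sub_carrier)

lemma some_mem_coset:
  assumes "x \<in> hcarrier M"
  shows "(SOME z. z \<in> qclass M C x) \<in> coset x"
proof -
  have "(SOME z. z \<in> qclass M C x) \<in> qclass M C x" using qclass_self[OF assms] by (rule someI)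
  then show ?thesis using mem_qclass_iff coset_self by metis
qed

lemma neg_mem_coset:
  assumes x: "x \<in> hcarrier M" and y: "y \<in> coset x"
  shows "hneg M y \<in> coset (hneg M x)"
proof -
  obtain c where c: "c \<in> C" "y \<in> hadd M x c" using y mem_coset_iff by blast
  have "hneg M y \<in> hadd M (hneg M x) (hneg M c)"
    using M.neg_mem_add_neg[OF x sub_carrier[OF c(1)] c(2)] .
  then show ?thesis using sub_neg[OF c(1)] mem_coset_iff by blast
qed

lemma smul_mem_coset:
  assumes r: "r \<in> hcarrier H" and x: "x \<in> hcarrier M" and y: "y \<in> coset x"
  shows "smul M r y \<in> coset (smul M r x)"
proof -
  obtain c where c: "c \<in> C" "y \<in> hadd M x c" using y mem_coset_iff by blast
  have "smul M r y \<in> hadd M (smul M r x) (smul M r c)"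
    using hmodule_smul_add_distrib[OF hmodule r x sub_carrier[OF c(1)]] c(2) by blast
  then show ?thesis using sub_smul[OF r c(1)] mem_coset_iff by blast
qed

lemma add_mem_coset:
  assumes x: "x \<in> hcarrier M" and y: "y \<in> hcarrier M"
    and x': "x' \<in> coset x" and y': "y' \<in> coset y" and z: "z \<in> hadd M x' y'"
  obtains t where "t \<in> hadd M x y" "z \<in> coset t"
proof -
  obtain c where c: "c \<in> C" "x' \<in> hadd M x c" using x' mem_coset_iff by blast
  obtain d where d: "d \<in> C" "y' \<in> hadd M y d" using y' mem_coset_iff by blast
  note c_car = sub_carrier[OF c(1)] and d_car = sub_carrier[OF d(1)]
  have y'_car: "y' \<in> hcarrier M" using coset_carrier[OF y y'] .
  obtain v where v: "v \<in> hadd M c y'" "z \<in> hadd M x v"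
    using M.add_reassoc_right[OF x c_car y'_car c(2) z] .
  have "v \<in> hadd M y' c" using v(1) M.add_commute[OF c_car y'_car] by simp
  then obtain u where u: "u \<in> hadd M d c" "v \<in> hadd M y u"
    using M.add_reassoc_right[OF y d_car c_car d(2)] by blast
  have u_sub: "u \<in> C" using sub_add[OF d(1) c(1) u(1)] .
  obtain t where "t \<in> hadd M x y" "z \<in> hadd M t u"
    using M.add_reassoc_left[OF x y sub_carrier[OF u_sub] u(2) v(2)] .
  then show ?thesis using that u_sub mem_coset_iff by blast
qed

lemma quot_carrier: "hcarrier (quot M C) = qclass M C ` hcarrier M"
  by (simp add: quot_def)

lemma quot_zero: "hzero (quot M C) = qclass M C (hzero M)"
  by (simp add: quot_def)

lemma quot_neg: "x \<in> hcarrier M \<Longrightarrow> hneg (quot M C) (qclass M C x) = qclass M C (hneg M x)"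
  using qclass_eq_of_mem_coset[OF M.neg_closed neg_mem_coset[OF _ some_mem_coset]]
  by (simp add: quot_def)

lemma quot_smul:
  "r \<in> hcarrier H \<Longrightarrow> x \<in> hcarrier M \<Longrightarrow> smul (quot M C) r (qclass M C x) = qclass M C (smul M r x)"
  using qclass_eq_of_mem_coset[OF hmodule_smul_closed[OF hmodule] smul_mem_coset[OF _ _ some_mem_coset]]
  by (simp add: quot_def)

lemma quot_add:
  assumes x: "x \<in> hcarrier M" and y: "y \<in> hcarrier M"
  shows "hadd (quot M C) (qclass M C x) (qclass M C y) = qclass M C ` hadd M x y"
proof
  show "qclass M C ` hadd M x y \<subseteq> hadd (quot M C) (qclass M C x) (qclass M C y)"
    using qclass_self x y by (auto simp: quot_def)
next
  show "hadd (quot M C) (qclass M C x) (qclass M C y) \<subseteq> qclass M C ` hadd M x y"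
  proof
    fix W assume "W \<in> hadd (quot M C) (qclass M C x) (qclass M C y)"
    then obtain z x' y' where W: "W = qclass M C z" and z: "z \<in> hadd M x' y'"
      and x': "x' \<in> qclass M C x" and y': "y' \<in> qclass M C y"
      by (auto simp: quot_def)
    have "x' \<in> coset x" "y' \<in> coset y" using x' y' mem_qclass_iff coset_self by metis+
    then obtain t where t: "t \<in> hadd M x y" "z \<in> coset t" using add_mem_coset[OF x y _ _ z] by blast
    have "qclass M C z = qclass M C t" using qclass_eq_of_mem_coset t M.add_mem_carrier[OF x y] by blast
    then show "W \<in> qclass M C ` hadd M x y" using W t(1) by blast
  qed
qed

lemma quot_setadd:
  assumes "S \<subseteq> hcarrier M" and "T \<subseteq> hcarrier M"
  shows "setadd (quot M C) (qclass M C ` S) (qclass M C ` T) = qclass M C ` setadd M S T"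
proof -
  have "setadd (quot M C) (qclass M C ` S) (qclass M C ` T)
      = (\<Union>x\<in>S. \<Union>y\<in>T. hadd (quot M C) (qclass M C x) (qclass M C y))"
    by (simp add: setadd_def)
  also have "\<dots> = (\<Union>x\<in>S. \<Union>y\<in>T. qclass M C ` hadd M x y)"
    by (intro SUP_cong refl) (use assms in \<open>auto simp: quot_add subset_iff\<close>)
  also have "\<dots> = qclass M C ` setadd M S T"
    by (simp add: setadd_def image_UN)
  finally show ?thesis .
qed

lemma quot_hyper_group: "hyper_group (quot M C)"
  unfolding hyper_group_def quot_carrier ball_simps(9)
proof (intro conjI ballI impI)
  show "hadd (quot M C) (qclass M C a) (qclass M C b) \<noteq> {}"
    if "a \<in> hcarrier M" "b \<in> hcarrier M" for a b
    using quot_add M.add_nonempty that by simp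
  show "hadd (quot M C) (qclass M C a) (qclass M C b) \<subseteq> qclass M C ` hcarrier M"
    if "a \<in> hcarrier M" "b \<in> hcarrier M" for a b
    using quot_add[OF that] M.add_mem_carrier[OF that] by blast
  show "hadd (quot M C) (qclass M C a) (qclass M C b) = hadd (quot M C) (qclass M C b) (qclass M C a)"
    if "a \<in> hcarrier M" "b \<in> hcarrier M" for a b
    using quot_add M.add_commute that by simp
  show "setadd (quot M C) (hadd (quot M C) (qclass M C a) (qclass M C b)) {qclass M C c}
      = setadd (quot M C) {qclass M C a} (hadd (quot M C) (qclass M C b) (qclass M C c))"
    if "a \<in> hcarrier M" "b \<in> hcarrier M" "c \<in> hcarrier M" for a b c
    using quot_setadd[of "hadd M a b" "{c}"] quot_setadd[of "{a}" "hadd M b c"]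
      quot_add M.add_assoc M.add_closed that by simp
  show "hzero (quot M C) \<in> qclass M C ` hcarrier M"
    using quot_zero by simp
  show "hadd (quot M C) (qclass M C a) (hzero (quot M C)) = {qclass M C a}"
    if "a \<in> hcarrier M" for a
    using quot_add quot_zero M.add_zero that by simp
  show "qclass M C z = hzero (quot M C)"
    if "z \<in> hcarrier M"
      and "\<forall>x\<in>hcarrier M. hadd (quot M C) (qclass M C x) (qclass M C z) = {qclass M C x}" for z
  proof -
    have "{qclass M C (hzero M)} = hadd (quot M C) (qclass M C (hzero M)) (qclass M C z)"
      using that by simp
    also have "\<dots> = {qclass M C z}" using quot_add[OF M.zero_closed] M.zero_add that(1) by simp
    finally show ?thesis using quot_zero by simp
  qed
  show "hneg (quot M C) (qclass M C a) \<in> qclass M C ` hcarrier M"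
    if "a \<in> hcarrier M" for a
    using quot_neg M.neg_closed that by simp
  show "hzero (quot M C) \<in> hadd (quot M C) (qclass M C a) (hneg (quot M C) (qclass M C a))"
    if "a \<in> hcarrier M" for a
    using quot_neg quot_add M.neg_closed quot_zero M.zero_mem_add_neg that by simp
  show "qclass M C b = hneg (quot M C) (qclass M C a)"
    if a: "a \<in> hcarrier M" and b: "b \<in> hcarrier M"
      and zero: "hzero (quot M C) \<in> hadd (quot M C) (qclass M C a) (qclass M C b)" for a b
  proof -
    obtain s where s: "s \<in> hadd M a b" "qclass M C (hzero M) = qclass M C s"
      using zero quot_add[OF a b] quot_zero by auto
    have s_car: "s \<in> hcarrier M" using M.add_mem_carrier[OF a b s(1)] .
    have "s \<in> C" using s(2) qclass_eq_iff[OF M.zero_closed] coset_zero coset_self[OF s_car] by simp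
    moreover have "b \<in> hadd M (hneg M a) s"
      using M.reversible[OF s_car a b s(1)] M.add_commute[OF s_car M.neg_closed[OF a]] by simp
    ultimately have "b \<in> coset (hneg M a)" using mem_coset_iff by blast
    then show ?thesis using qclass_eq_of_mem_coset[OF M.neg_closed[OF a]] quot_neg[OF a] by simp
  qed
  show "qclass M C c \<in> hadd (quot M C) (qclass M C a) (hneg (quot M C) (qclass M C b))"
    if a: "a \<in> hcarrier M" and b: "b \<in> hcarrier M" and c: "c \<in> hcarrier M"
      and sum: "qclass M C a \<in> hadd (quot M C) (qclass M C b) (qclass M C c)" for a b c
  proof -
    obtain t where t: "t \<in> hadd M b c" "qclass M C a = qclass M C t"
      using sum quot_add[OF b c] by auto
    have t_car: "t \<in> hcarrier M" using M.add_mem_carrier[OF b c t(1)] .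
    have "c \<in> hadd M t (hneg M b)" using M.reversible[OF t_car b c t(1)] .
    then show ?thesis using t(2) quot_neg[OF b] quot_add[OF t_car M.neg_closed[OF b]] by simp
  qed
qed

lemma quot_hmodule: "hmodule H (quot M C)"
  unfolding hmodule_def quot_carrier ball_simps(9)
proof (intro conjI ballI)
  interpret H: hyper_group H using hmodule by (intro hyperring_hyper_group hmodule_hyperring)
  note smul_closed = hmodule_smul_closed[OF hmodule]
  show "hyperring H" using hmodule by (rule hmodule_hyperring)
  show "hypergroup (quot M C)" using quot_hyper_group by (simp add: hyper_group_iff_hypergroup)
  show "smul (quot M C) r (qclass M C m) \<in> qclass M C ` hcarrier M"
    if "r \<in> hcarrier H" "m \<in> hcarrier M" for r m
    using quot_smul smul_closed that by simp
  show "smul (quot M C) (hone H) (qclass M C m) = qclass M C m" if "m \<in> hcarrier M" for m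
    using quot_smul hyperring_one_closed[OF hmodule_hyperring[OF hmodule]]
      hmodule_smul_one[OF hmodule] that by simp
  show "smul (quot M C) (hzero H) (qclass M C m) = hzero (quot M C)" if "m \<in> hcarrier M" for m
    using quot_smul H.zero_closed hmodule_smul_zero[OF hmodule] quot_zero that by simp
  show "smul (quot M C) (hmul H x y) (qclass M C m) = smul (quot M C) x (smul (quot M C) y (qclass M C m))"
    if "x \<in> hcarrier H" "y \<in> hcarrier H" "m \<in> hcarrier M" for x y m
    using quot_smul smul_closed hyperring_mul_closed[OF hmodule_hyperring[OF hmodule]]
      hmodule_smul_assoc[OF hmodule] that by simp
  show "smul (quot M C) x ` hadd (quot M C) (qclass M C m) (qclass M C m')
      = hadd (quot M C) (smul (quot M C) x (qclass M C m)) (smul (quot M C) x (qclass M C m'))"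
    if x: "x \<in> hcarrier H" and m: "m \<in> hcarrier M" and m': "m' \<in> hcarrier M" for x m m'
  proof -
    have "smul (quot M C) x ` hadd (quot M C) (qclass M C m) (qclass M C m')
        = qclass M C ` smul M x ` hadd M m m'"
      using quot_add[OF m m'] quot_smul[OF x] M.add_mem_carrier[OF m m']
      by (auto simp: image_image intro!: image_cong)
    also have "\<dots> = hadd (quot M C) (smul (quot M C) x (qclass M C m)) (smul (quot M C) x (qclass M C m'))"
      using hmodule_smul_add_distrib[OF hmodule x m m'] quot_add smul_closed quot_smul x m m' by simp
    finally show ?thesis .
  qed
  show "(\<lambda>r. smul (quot M C) r (qclass M C m)) ` hadd H x y
      = hadd (quot M C) (smul (quot M C) x (qclass M C m)) (smul (quot M C) y (qclass M C m))"
    if x: "x \<in> hcarrier H" and y: "y \<in> hcarrier H" and m: "m \<in> hcarrier M" for x y m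
  proof -
    have "(\<lambda>r. smul (quot M C) r (qclass M C m)) ` hadd H x y
        = qclass M C ` (\<lambda>r. smul M r m) ` hadd H x y"
      using quot_smul[OF _ m] H.add_mem_carrier[OF x y] by (auto simp: image_image intro!: image_cong)
    also have "\<dots> = hadd (quot M C) (smul (quot M C) x (qclass M C m)) (smul (quot M C) y (qclass M C m))"
      using hmodule_add_smul_distrib[OF hmodule x y m] quot_add smul_closed quot_smul x y m by simp
    finally show ?thesis .
  qed
qed

lemma qclass_strict_hmorphism: "strict_hmorphism H M (quot M C) (qclass M C)"
  unfolding strict_hmorphism_def hmorphism_def quot_carrier
  using quot_zero quot_smul quot_add hmodule_smul_closed[OF hmodule] by auto

lemma quot_lift_qclass:
  assumes "x \<in> hcarrier M" and "\<And>x y. x \<in> hcarrier M \<Longrightarrow> y \<in> coset x \<Longrightarrow> f y = f x"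
  shows "quot_lift f (qclass M C x) = f x"
  using assms some_mem_coset unfolding quot_lift_def by blast

lemma hmorphism_constant_on_coset:
  assumes D: "hmodule H D" and f: "hmorphism H M D f" and f_sub: "\<And>c. c \<in> C \<Longrightarrow> f c = hzero D"
    and x: "x \<in> hcarrier M" and y: "y \<in> coset x"
  shows "f y = f x"
proof -
  interpret D: hyper_group D using D by (rule hmodule_hyper_group)
  obtain c where c: "c \<in> C" "y \<in> hadd M x c" using y mem_coset_iff by blast
  have "f y \<in> hadd D (f x) (f c)" using hmorphism_add[OF f x sub_carrier[OF c(1)]] c(2) by blast
  also have "\<dots> = {f x}" using f_sub[OF c(1)] D.add_zero hmorphism_carrier[OF f x] by simp
  finally show ?thesis by simp
qed

lemma quot_lift_add:
  assumes a: "a \<in> hcarrier M" and b: "b \<in> hcarrier M"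
    and const: "\<And>x y. x \<in> hcarrier M \<Longrightarrow> y \<in> coset x \<Longrightarrow> f y = f x"
  shows "quot_lift f ` hadd (quot M C) (qclass M C a) (qclass M C b) = f ` hadd M a b"
  unfolding quot_add[OF a b] image_image
  using quot_lift_qclass[OF _ const] M.add_mem_carrier[OF a b] by (intro image_cong) auto

lemma hmorphism_quot_lift:
  assumes D: "hmodule H D" and f: "hmorphism H M D f" and f_sub: "\<And>c. c \<in> C \<Longrightarrow> f c = hzero D"
  shows "hmorphism H (quot M C) D (quot_lift f)"
    and "x \<in> hcarrier M \<Longrightarrow> quot_lift f (qclass M C x) = f x"
proof -
  note const = hmorphism_constant_on_coset[OF D f f_sub]
  note lift = quot_lift_qclass[OF _ const]
  show "x \<in> hcarrier M \<Longrightarrow> quot_lift f (qclass M C x) = f x" by (rule lift)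
  show "hmorphism H (quot M C) D (quot_lift f)"
    unfolding hmorphism_def quot_carrier ball_simps(9)
  proof (intro conjI ballI)
    show "quot_lift f (qclass M C m) \<in> hcarrier D" if "m \<in> hcarrier M" for m
      using lift hmorphism_carrier[OF f] that by simp
    show "quot_lift f (hzero (quot M C)) = hzero D"
      using lift quot_zero hmorphism_zero[OF f] by simp
    show "quot_lift f (smul (quot M C) r (qclass M C m)) = smul D r (quot_lift f (qclass M C m))"
      if "r \<in> hcarrier H" "m \<in> hcarrier M" for r m
      using lift quot_smul hmodule_smul_closed[OF hmodule] hmorphism_smul[OF f] that by simp
    show "quot_lift f ` hadd (quot M C) (qclass M C a) (qclass M C b)
        \<subseteq> hadd D (quot_lift f (qclass M C a)) (quot_lift f (qclass M C b))"
      if "a \<in> hcarrier M" "b \<in> hcarrier M" for a b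
      using quot_lift_add[OF that const] hmorphism_add[OF f that] lift that by simp
  qed
qed

lemma strict_hmorphism_quot_lift:
  assumes D: "hmodule H D" and f: "strict_hmorphism H M D f"
    and f_sub: "\<And>c. c \<in> C \<Longrightarrow> f c = hzero D"
  shows "strict_hmorphism H (quot M C) D (quot_lift f)"
  unfolding strict_hmorphism_def quot_carrier ball_simps(9)
proof (intro conjI ballI)
  note fm = strict_hmorphism_hmorphism[OF f]
  note const = hmorphism_constant_on_coset[OF D fm f_sub]
  show "hmorphism H (quot M C) D (quot_lift f)" using hmorphism_quot_lift(1)[OF D fm f_sub] .
  show "quot_lift f ` hadd (quot M C) (qclass M C a) (qclass M C b)
      = hadd D (quot_lift f (qclass M C a)) (quot_lift f (qclass M C b))"
    if "a \<in> hcarrier M" "b \<in> hcarrier M" for a b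
    using quot_lift_add[OF that const] strict_hmorphism_add[OF f that]
      quot_lift_qclass[OF _ const] that by simp
qed

end

locale hmodule_embedding =
  fixes H :: "'r hring" and A :: "('a, 'r) hmod" and B :: "('b, 'r) hmod"
    and i :: "'a \<Rightarrow> 'b" and C :: "'a set"
  assumes hmodule_A: "hmodule H A" and hmodule_B: "hmodule H B"
    and strict: "strict_hmorphism H A B i" and inj: "inj_on i (hcarrier A)"
    and submodule: "hsubmodule H A C"
begin

sublocale A: hmodule_quotient H A C
  using hmodule_A submodule by (rule hmodule_quotient.intro)

sublocale B: hmodule_quotient H B "i ` C"
  using hmodule_B strict_hmorphism_image_submodule[OF hmodule_A hmodule_B strict submodule]
  by (rule hmodule_quotient.intro)

lemma i_hmorphism: "hmorphism H A B i"
  using strict by (rule strict_hmorphism_hmorphism)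

lemma coset_image: "a \<in> hcarrier A \<Longrightarrow> B.coset (i a) = i ` A.coset a"
  using strict_hmorphism_image_coset[OF strict] A.sub_carrier by blast

lemma qclass_image_eq_iff:
  assumes x: "x \<in> hcarrier A" and y: "y \<in> hcarrier A"
  shows "qclass B (i ` C) (i x) = qclass B (i ` C) (i y) \<longleftrightarrow> qclass A C x = qclass A C y"
proof -
  have "A.coset x \<subseteq> hcarrier A" "A.coset y \<subseteq> hcarrier A"
    using A.coset_carrier x y by blast+
  then have "i ` A.coset x = i ` A.coset y \<longleftrightarrow> A.coset x = A.coset y"
    by (rule inj_on_image_eq_iff[OF inj])
  then show ?thesis
    using B.qclass_eq_iff[OF hmorphism_carrier[OF i_hmorphism x]] A.qclass_eq_iff[OF x]
      coset_image x y by simp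
qed

lemma qclass_image_eqE:
  assumes y: "y \<in> hcarrier B" and a: "a \<in> hcarrier A"
    and eq: "qclass B (i ` C) y = qclass B (i ` C) (i a)"
  obtains a' where "a' \<in> hcarrier A" "y = i a'" "qclass A C a' = qclass A C a"
proof -
  have "y \<in> B.coset (i a)"
    using eq B.qclass_eq_iff[OF y] B.coset_self[OF y] by simp
  then obtain a' where "a' \<in> A.coset a" "y = i a'" using coset_image[OF a] by blast
  then show ?thesis using that A.coset_carrier[OF a] A.qclass_eq_of_mem_coset[OF a] by blast
qed

lemma induced_map_eq_quot_lift: "induced_map B C i = quot_lift (qclass B (i ` C) \<circ> i)"
  by (simp add: fun_eq_iff induced_map_def quot_lift_def)

lemma projection_strict_hmorphism: "strict_hmorphism H A (quot B (i ` C)) (qclass B (i ` C) \<circ> i)"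
  using strict B.qclass_strict_hmorphism by (rule strict_hmorphism_comp)

lemma projection_sub: "c \<in> C \<Longrightarrow> (qclass B (i ` C) \<circ> i) c = hzero (quot B (i ` C))"
  using B.qclass_eq_of_mem_coset[OF B.M.zero_closed] B.coset_zero B.quot_zero by simp

lemma induced_map_qclass:
  "x \<in> hcarrier A \<Longrightarrow> induced_map B C i (qclass A C x) = qclass B (i ` C) (i x)"
  using A.hmorphism_quot_lift(2)[OF B.quot_hmodule
      strict_hmorphism_hmorphism[OF projection_strict_hmorphism] projection_sub]
  by (simp add: induced_map_eq_quot_lift comp_def)

lemma induced_map_strict: "strict_hmorphism H (quot A C) (quot B (i ` C)) (induced_map B C i)"
  unfolding induced_map_eq_quot_lift
  using B.quot_hmodule projection_strict_hmorphism projection_sub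
  by (rule A.strict_hmorphism_quot_lift)

lemma induced_map_inj: "inj_on (induced_map B C i) (hcarrier (quot A C))"
  unfolding A.quot_carrier
  by (rule inj_onI) (auto simp: induced_map_qclass qclass_image_eq_iff)

lemma comm_square:
  "comm_square H A B (quot A C) (quot B (i ` C)) i (qclass A C) (qclass B (i ` C)) (induced_map B C i)"
  unfolding comm_square_def
  using hmodule_A hmodule_B A.quot_hmodule B.quot_hmodule i_hmorphism
    A.qclass_strict_hmorphism B.qclass_strict_hmorphism induced_map_strict induced_map_qclass
  by (simp add: strict_hmorphism_hmorphism)

lemma hmorphism_factor_through_i:
  assumes D: "hmodule H D" and f: "hmorphism H D B f"
    and f_range: "\<And>x. x \<in> hcarrier D \<Longrightarrow> f x \<in> i ` hcarrier A"
  shows "hmorphism H D A (\<lambda>x. inv_into (hcarrier A) i (f x))"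
  unfolding hmorphism_def
proof (intro conjI ballI subsetI)
  interpret D: hyper_group D using D by (rule hmodule_hyper_group)
  define h where "h x = inv_into (hcarrier A) i (f x)" for x
  have h: "h x \<in> hcarrier A" "i (h x) = f x" if "x \<in> hcarrier D" for x
    using f_range[OF that] unfolding h_def by (auto intro: inv_into_into f_inv_into_f)
  have i_eq: "u = v" if "u \<in> hcarrier A" "v \<in> hcarrier A" "i u = i v" for u v
    using inj_onD[OF inj] that by blast
  show "h m \<in> hcarrier A" if "m \<in> hcarrier D" for m
    using h that by blast
  show "h (hzero D) = hzero A"
    using i_eq h[OF D.zero_closed] hmorphism_zero[OF f] hmorphism_zero[OF i_hmorphism] by simp
  show "h (smul D r m) = smul A r (h m)" if r: "r \<in> hcarrier H" and m: "m \<in> hcarrier D" for r m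
  proof (rule i_eq)
    have rm: "smul D r m \<in> hcarrier D" using hmodule_smul_closed[OF D r m] .
    show "h (smul D r m) \<in> hcarrier A" using h rm by blast
    show "smul A r (h m) \<in> hcarrier A" using hmodule_smul_closed[OF hmodule_A r h(1)[OF m]] .
    show "i (h (smul D r m)) = i (smul A r (h m))"
      using h rm m hmorphism_smul[OF f r m] hmorphism_smul[OF i_hmorphism r h(1)[OF m]] by simp
  qed
  show "z \<in> hadd A (h a) (h b)" if z: "z \<in> h ` hadd D a b"
    and a: "a \<in> hcarrier D" and b: "b \<in> hcarrier D" for z a b
  proof -
    obtain w where w: "w \<in> hadd D a b" "z = h w" using z by blast
    have "f w \<in> hadd B (f a) (f b)" using hmorphism_add[OF f a b] w(1) by blast
    also have "\<dots> = i ` hadd A (h a) (h b)" using strict_hmorphism_add[OF strict] h a b by simp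
    finally obtain u where u: "u \<in> hadd A (h a) (h b)" "f w = i u" by blast
    have "h w = u"
      using i_eq h D.add_mem_carrier[OF a b w(1)] A.M.add_mem_carrier[OF h(1)[OF a] h(1)[OF b] u(1)] u(2)
      by metis
    then show ?thesis using w u by simp
  qed
qed

lemma pullback:
  "is_pullback H A B (quot A C) (quot B (i ` C)) i (qclass A C) (qclass B (i ` C))
     (induced_map B C i) TYPE('d)"
  unfolding is_pullback_def
proof (intro conjI allI impI)
  show "comm_square H A B (quot A C) (quot B (i ` C)) i (qclass A C) (qclass B (i ` C))
      (induced_map B C i)" by (rule comm_square)
  fix D :: "('d, 'r) hmod" and f g
  assume "hmodule H D \<and> hmorphism H D B f \<and> hmorphism H D (quot A C) g \<and>
    (\<forall>x\<in>hcarrier D. qclass B (i ` C) (f x) = induced_map B C i (g x))"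
  then have D: "hmodule H D" and f: "hmorphism H D B f" and g: "hmorphism H D (quot A C) g"
    and fg: "\<And>x. x \<in> hcarrier D \<Longrightarrow> qclass B (i ` C) (f x) = induced_map B C i (g x)"
    by blast+
  define h where "h x = inv_into (hcarrier A) i (f x)" for x
  have h: "h x \<in> hcarrier A \<and> i (h x) = f x \<and> qclass A C (h x) = g x" if x: "x \<in> hcarrier D" for x
  proof -
    obtain a where a: "a \<in> hcarrier A" "g x = qclass A C a"
      using hmorphism_carrier[OF g x] A.quot_carrier by auto
    have "qclass B (i ` C) (f x) = qclass B (i ` C) (i a)"
      using fg[OF x] a induced_map_qclass by simp
    then obtain a' where a': "a' \<in> hcarrier A" "f x = i a'" "qclass A C a' = qclass A C a"
      using qclass_image_eqE[OF hmorphism_carrier[OF f x] a(1)] by blast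
    then have "h x = a'" unfolding h_def using inv_into_f_f[OF inj] by simp
    then show ?thesis using a a' by simp
  qed
  have h_hom: "hmorphism H D A h"
    unfolding h_def using hmorphism_factor_through_i[OF D f] h by (metis imageI)
  show "\<exists>h. hmorphism H D A h \<and> (\<forall>x\<in>hcarrier D. i (h x) = f x \<and> qclass A C (h x) = g x) \<and>
      (\<forall>h'. hmorphism H D A h' \<and> (\<forall>x\<in>hcarrier D. i (h' x) = f x \<and> qclass A C (h' x) = g x) \<longrightarrow>
        (\<forall>x\<in>hcarrier D. h' x = h x))"
  proof (intro exI conjI allI impI ballI)
    show "hmorphism H D A h" by (rule h_hom)
    show "i (h x) = f x" "qclass A C (h x) = g x" if "x \<in> hcarrier D" for x
      using h that by blast+
    show "h' x = h x"
      if "hmorphism H D A h' \<and> (\<forall>x\<in>hcarrier D. i (h' x) = f x \<and> qclass A C (h' x) = g x)"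
        and x: "x \<in> hcarrier D" for h' x
      using inj_onD[OF inj] hmorphism_carrier[of H D A h' x] h[OF x] that by metis
  qed
qed

lemma pushout:
  "is_pushout H A B (quot A C) (quot B (i ` C)) i (qclass A C) (qclass B (i ` C))
     (induced_map B C i) TYPE('e)"
  unfolding is_pushout_def
proof (intro conjI allI impI)
  show "comm_square H A B (quot A C) (quot B (i ` C)) i (qclass A C) (qclass B (i ` C))
      (induced_map B C i)" by (rule comm_square)
  fix D :: "('e, 'r) hmod" and f g
  assume "hmodule H D \<and> hmorphism H B D f \<and> hmorphism H (quot A C) D g \<and>
    (\<forall>x\<in>hcarrier A. f (i x) = g (qclass A C x))"
  then have D: "hmodule H D" and f: "hmorphism H B D f" and g: "hmorphism H (quot A C) D g"
    and fg: "\<And>x. x \<in> hcarrier A \<Longrightarrow> f (i x) = g (qclass A C x)"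
    by blast+
  have f_sub: "f y = hzero D" if y: "y \<in> i ` C" for y
  proof -
    obtain c where c: "c \<in> C" "y = i c" using y by blast
    have "qclass A C c = qclass A C (hzero A)"
      using A.qclass_eq_of_mem_coset[OF A.M.zero_closed] A.coset_zero c(1) by simp
    then show ?thesis
      using fg[OF A.sub_carrier[OF c(1)]] c(2) hmorphism_zero[OF g] A.quot_zero by simp
  qed
  note k = B.hmorphism_quot_lift[OF D f f_sub]
  show "\<exists>h. hmorphism H (quot B (i ` C)) D h \<and> (\<forall>y\<in>hcarrier B. h (qclass B (i ` C) y) = f y) \<and>
      (\<forall>z\<in>hcarrier (quot A C). h (induced_map B C i z) = g z) \<and>
      (\<forall>h'. hmorphism H (quot B (i ` C)) D h' \<and> (\<forall>y\<in>hcarrier B. h' (qclass B (i ` C) y) = f y) \<and>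
          (\<forall>z\<in>hcarrier (quot A C). h' (induced_map B C i z) = g z) \<longrightarrow>
        (\<forall>w\<in>hcarrier (quot B (i ` C)). h' w = h w))"
  proof (intro exI conjI allI impI ballI)
    show "hmorphism H (quot B (i ` C)) D (quot_lift f)" by (rule k(1))
    show "quot_lift f (qclass B (i ` C) y) = f y" if "y \<in> hcarrier B" for y
      using k(2) that by blast
    show "quot_lift f (induced_map B C i z) = g z" if "z \<in> hcarrier (quot A C)" for z
      using that A.quot_carrier induced_map_qclass k(2) hmorphism_carrier[OF i_hmorphism] fg by auto
    show "h' w = quot_lift f w"
      if "hmorphism H (quot B (i ` C)) D h' \<and> (\<forall>y\<in>hcarrier B. h' (qclass B (i ` C) y) = f y) \<and>
          (\<forall>z\<in>hcarrier (quot A C). h' (induced_map B C i z) = g z)"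
        and "w \<in> hcarrier (quot B (i ` C))" for h' w
      using that B.quot_carrier k(2) by auto
  qed
qed

end

theorem mainTheorem20:
  fixes H :: "'r hring"
    and A :: "('a, 'r) hmod" and B :: "('b, 'r) hmod"
    and i :: "'a \<Rightarrow> 'b" and C :: "'a set"
  assumes "hyperring H"
    and "hmodule H A" and "hmodule H B"
    and "strict_hmorphism H A B i" and "inj_on i (hcarrier A)"
    and "hsubmodule H A C"
  shows "(\<forall>x\<in>hcarrier A. \<forall>y\<in>hcarrier A. qclass A C x = qclass A C y \<longrightarrow>
            qclass B (i ` C) (i x) = qclass B (i ` C) (i y))
     \<and> (\<forall>x\<in>hcarrier A. induced_map B C i (qclass A C x) = qclass B (i ` C) (i x))
     \<and> strict_hmorphism H (quot A C) (quot B (i ` C)) (induced_map B C i)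
     \<and> inj_on (induced_map B C i) (hcarrier (quot A C))
     \<and> is_pullback H A B (quot A C) (quot B (i ` C)) i (qclass A C) (qclass B (i ` C))
          (induced_map B C i) TYPE('d)
     \<and> is_pushout H A B (quot A C) (quot B (i ` C)) i (qclass A C) (qclass B (i ` C))
          (induced_map B C i) TYPE('e)"
proof -
  interpret hmodule_embedding H A B i C
    using assms(2-6) by (rule hmodule_embedding.intro)
  show ?thesis
    using qclass_image_eq_iff induced_map_qclass induced_map_strict induced_map_inj pullback pushout
    by blast
qed

end
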